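(* Let $\sigma$ and $\tau$ be two $\mu$-rigid strategies on an arena $A$. If $\mathrm{GR}(\sigma)=\mathrm{GR}(\tau)$ then $\sigma=\tau$.
   Context: First-order variables are split into three disjoint countable sets: $\mathcal A$-, $\mathcal O$- and $\mathcal P$-variables. $\mathcal{AP}$-terms (resp. $\mathcal{OP}$-terms) are first-order terms built from $\mathcal A$- and $\mathcal P$-variables (resp. $\mathcal O$- and $\mathcal P$-variables). Arena: a finite forest whose nodes (moves) carry a first-order label (a list of $\mathcal A$-variables, all distinct across the arena) and an atomic label (a list of atomic formulas $X\,t_1\dots t_k$ with $\mathcal{AP}$-terms whose $\mathcal A$-variables occur in the first-order label of the node or an ancestor). Polarity is depth parity: even = Opponent (O), odd = Player (P); roots are initial. Justified sequence: finite sequence of move occurrences; each non-initial occurrence has a $\lambda$-pointer to an earlier occurrence of its father; each element of the atomic label of an occurrence has at most one $\mu$-pointer to an element of the atomic label of an earlier occurrence of opposite polarity. Instantiations: each O-move occurrence carries an $\mathcal O$-instantiation (list of $\mathcal O$-variables of the length of its first-order label), each P-move occurrence a $\mathcal P$-instantiation (list of $\mathcal{OP}$-terms of that length); all $\mathcal O$-variables in $\mathcal O$-instantiations distinct. For an occurrence $m$ with instantiation $[t_1..t_k]$ and first-order label $[x_1..x_k]$, $\theta_m=\{x_i\mapsto t_i\}$ if $m$ is initial, else $\theta_n\cup\{x_i\mapsto t_i\}$ with $n$ its $\lambda$-justifier. Play: instantiated justified sequence with alternating polarities, no $\mu$-pointers from O-moves, exactly one $\mu$-pointer from each element of the atomic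 label of each P-move, every $\mu$-pointer from $X\,t_1..t_k$ at $m$ to $Y\,u_1..u_p$ at $n$ satisfying $X=Y$, $k=p$, $t_i\theta_m=u_i\theta_n$, and every $\mathcal O$-variable in a $\mathcal P$-instantiation occurring in an earlier $\mathcal O$-instantiation. An $\mathcal O$-renaming is an injection $\varsigma$ of $\mathcal O$-variables into themselves; $s\varsigma$ replaces each $o$ by $\varsigma(o)$ in all instantiations. Strategy: non-empty set of even-length plays closed under even-length prefixes, deterministic ($sm,sn\in\sigma\Rightarrow sm=sn$, including pointers and instantiations) and uniform (closed under $\mathcal O$-renamings). A play is $\mu$-rigid if for every Player move occurrence: its atomic label has the same length as that of the immediately preceding move, each of its $\mu$-pointers goes to the corresponding element (same position) of the atomic label of the immediately preceding move, and its instantiation equals the instantiation of the immediately preceding move. A strategy is $\mu$-rigid if all its plays are. $\mathrm{GR}(s)$ erases all instantiations and $\mu$-pointers from a play $s$ (keeping moves and $\lambda$-pointers); $\mathrm{GR}(\sigma)=\{\mathrm{GR}(s)\mid s\in\sigma\}$. *)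

theory Defs
  imports Main
begin

datatype var = AV nat | OV nat | PV nat

datatype 'f trm = Var var | Fn 'f "'f trm list"

fun vars :: "'f trm \<Rightarrow> var set" where
  "vars (Var v) = {v}"
| "vars (Fn f ts) = (\<Union>t\<in>set ts. vars t)"

definition is_AV :: "var \<Rightarrow> bool" where "is_AV v = (\<exists>a. v = AV a)"
definition is_OV :: "var \<Rightarrow> bool" where "is_OV v = (\<exists>a. v = OV a)"

definition AP_term :: "'f trm \<Rightarrow> bool" where "AP_term t = (\<forall>v\<in>vars t. \<not> is_OV v)"
definition OP_term :: "'f trm \<Rightarrow> bool" where "OP_term t = (\<forall>v\<in>vars t. \<not> is_AV v)"

fun subst :: "(nat \<Rightarrow> 'f trm option) \<Rightarrow> 'f trm \<Rightarrow> 'f trm" where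
  "subst \<theta> (Var (AV a)) = (case \<theta> a of None \<Rightarrow> Var (AV a) | Some t \<Rightarrow> t)"
| "subst \<theta> (Var v) = Var v"
| "subst \<theta> (Fn f ts) = Fn f (map (subst \<theta>) ts)"

fun oren :: "(nat \<Rightarrow> nat) \<Rightarrow> 'f trm \<Rightarrow> 'f trm" where
  "oren \<rho> (Var (OV o')) = Var (OV (\<rho> o'))"
| "oren \<rho> (Var v) = Var v"
| "oren \<rho> (Fn f ts) = Fn f (map (oren \<rho>) ts)"

text \<open>An arena: a finite set of moves with a parent function (forest), a first-order
  label (list of A-variable indices) and an atomic label (list of atomic formulas
  X t1..tk, with predicate symbol of type 'p).\<close>

record ('m, 'f, 'p) arena =
  moves :: "'m set"
  par :: "'m \<Rightarrow> 'm option"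
  fol :: "'m \<Rightarrow> nat list"
  atl :: "'m \<Rightarrow> ('p \<times> 'f trm list) list"

inductive has_depth :: "('m \<Rightarrow> 'm option) \<Rightarrow> 'm \<Rightarrow> nat \<Rightarrow> bool" for pr where
  root: "pr m = None \<Longrightarrow> has_depth pr m 0"
| child: "pr m = Some p \<Longrightarrow> has_depth pr p n \<Longrightarrow> has_depth pr m (Suc n)"

definition is_O :: "('m, 'f, 'p) arena \<Rightarrow> 'm \<Rightarrow> bool" where
  "is_O A m = (\<exists>n. has_depth (par A) m n \<and> even n)"

definition is_P :: "('m, 'f, 'p) arena \<Rightarrow> 'm \<Rightarrow> bool" where
  "is_P A m = (\<exists>n. has_depth (par A) m n \<and> odd n)"

definition ancestor_eq :: "('m, 'f, 'p) arena \<Rightarrow> 'm \<Rightarrow> 'm \<Rightarrow> bool" where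
  "ancestor_eq A a m = (\<lambda>x y. par A y = Some x)\<^sup>*\<^sup>* a m"

definition wf_arena :: "('m, 'f, 'p) arena \<Rightarrow> bool" where
  "wf_arena A \<longleftrightarrow>
     finite (moves A)
   \<and> (\<forall>m\<in>moves A. \<forall>p. par A m = Some p \<longrightarrow> p \<in> moves A)
   \<and> (\<forall>m\<in>moves A. \<exists>n. has_depth (par A) m n)
   \<and> (\<forall>m\<in>moves A. distinct (fol A m))
   \<and> (\<forall>m\<in>moves A. \<forall>m'\<in>moves A. m \<noteq> m' \<longrightarrow> set (fol A m) \<inter> set (fol A m') = {})
   \<and> (\<forall>m\<in>moves A. \<forall>(X, ts)\<in>set (atl A m). \<forall>t\<in>set ts.
        AP_term t \<and> (\<forall>a. AV a \<in> vars t \<longrightarrow>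
          (\<exists>m'. ancestor_eq A m' m \<and> a \<in> set (fol A m'))))"

text \<open>A move occurrence: the move, its lambda-pointer (index of an earlier occurrence),
  one optional mu-pointer per element of the atomic label (index of an earlier
  occurrence, position in its atomic label) and its instantiation.\<close>

record ('m, 'f) occ =
  mv :: 'm
  jp :: "nat option"
  mp :: "(nat \<times> nat) option list"
  ins :: "'f trm list"

definition thetas :: "('m, 'f, 'p) arena \<Rightarrow> ('m, 'f) occ list \<Rightarrow> (nat \<Rightarrow> 'f trm option) list" where
  "thetas A s = foldl (\<lambda>acc x. acc @
      [(case jp x of None \<Rightarrow> Map.empty | Some j \<Rightarrow> acc ! j) ++ map_of (zip (fol A (mv x)) (ins x))])
     [] s"

definition justified_seq :: "('m, 'f, 'p) arena \<Rightarrow> ('m, 'f) occ list \<Rightarrow> bool" where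
  "justified_seq A s \<longleftrightarrow>
    (\<forall>i<length s.
       mv (s!i) \<in> moves A
     \<and> (case par A (mv (s!i)) of
          None \<Rightarrow> jp (s!i) = None
        | Some p \<Rightarrow> (\<exists>j<i. jp (s!i) = Some j \<and> mv (s!j) = p))
     \<and> length (mp (s!i)) = length (atl A (mv (s!i)))
     \<and> (\<forall>q<length (mp (s!i)). \<forall>j q'. mp (s!i) ! q = Some (j, q') \<longrightarrow>
          j < i \<and> q' < length (atl A (mv (s!j))) \<and> (is_O A (mv (s!i)) \<longleftrightarrow> is_P A (mv (s!j))))
     \<and> length (ins (s!i)) = length (fol A (mv (s!i)))
     \<and> (is_O A (mv (s!i)) \<longrightarrow> (\<forall>t\<in>set (ins (s!i)). \<exists>o'. t = Var (OV o')))
     \<and> (is_P A (mv (s!i)) \<longrightarrow> (\<forall>t\<in>set (ins (s!i)). OP_term t)))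
   \<and> distinct (concat (map ins (filter (\<lambda>x. is_O A (mv x)) s)))"

definition play :: "('m, 'f, 'p) arena \<Rightarrow> ('m, 'f) occ list \<Rightarrow> bool" where
  "play A s \<longleftrightarrow> justified_seq A s \<and>
    (\<forall>i. Suc i < length s \<longrightarrow> (is_O A (mv (s!i)) \<longleftrightarrow> is_P A (mv (s!Suc i))))
  \<and> (\<forall>i<length s. is_O A (mv (s!i)) \<longrightarrow> (\<forall>x\<in>set (mp (s!i)). x = None))
  \<and> (\<forall>i<length s. is_P A (mv (s!i)) \<longrightarrow> (\<forall>x\<in>set (mp (s!i)). x \<noteq> None))
  \<and> (\<forall>i<length s. \<forall>q<length (mp (s!i)). \<forall>j q'. mp (s!i) ! q = Some (j, q') \<longrightarrow>
       (let (X, ts) = atl A (mv (s!i)) ! q; (Y, us) = atl A (mv (s!j)) ! q' in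
          X = Y \<and> length ts = length us \<and>
          map (subst (thetas A s ! i)) ts = map (subst (thetas A s ! j)) us))
  \<and> (\<forall>i<length s. is_P A (mv (s!i)) \<longrightarrow>
       (\<forall>o'. (\<exists>t\<in>set (ins (s!i)). OV o' \<in> vars t) \<longrightarrow>
          (\<exists>j<i. is_O A (mv (s!j)) \<and> Var (OV o') \<in> set (ins (s!j)))))"

definition rename :: "(nat \<Rightarrow> nat) \<Rightarrow> ('m, 'f) occ list \<Rightarrow> ('m, 'f) occ list" where
  "rename \<rho> s = map (\<lambda>x. x\<lparr>ins := map (oren \<rho>) (ins x)\<rparr>) s"

definition strategy :: "('m, 'f, 'p) arena \<Rightarrow> ('m, 'f) occ list set \<Rightarrow> bool" where
  "strategy A \<sigma> \<longleftrightarrow>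
     \<sigma> \<noteq> {}
   \<and> (\<forall>s\<in>\<sigma>. play A s \<and> even (length s))
   \<and> (\<forall>s\<in>\<sigma>. \<forall>n. even n \<longrightarrow> take n s \<in> \<sigma>)
   \<and> (\<forall>s m n. s @ [m] \<in> \<sigma> \<longrightarrow> s @ [n] \<in> \<sigma> \<longrightarrow> m = n)
   \<and> (\<forall>s\<in>\<sigma>. \<forall>\<rho>. inj \<rho> \<longrightarrow> rename \<rho> s \<in> \<sigma>)"

definition mu_rigid_play :: "('m, 'f, 'p) arena \<Rightarrow> ('m, 'f) occ list \<Rightarrow> bool" where
  "mu_rigid_play A s \<longleftrightarrow>
    (\<forall>i<length s. is_P A (mv (s!i)) \<longrightarrow> 0 < i \<and>
        length (atl A (mv (s!i))) = length (atl A (mv (s!(i-1))))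
      \<and> (\<forall>q<length (mp (s!i)). mp (s!i) ! q = Some (i-1, q))
      \<and> ins (s!i) = ins (s!(i-1)))"

definition mu_rigid :: "('m, 'f, 'p) arena \<Rightarrow> ('m, 'f) occ list set \<Rightarrow> bool" where
  "mu_rigid A \<sigma> \<longleftrightarrow> (\<forall>s\<in>\<sigma>. mu_rigid_play A s)"

definition GR_play :: "('m, 'f) occ list \<Rightarrow> ('m \<times> nat option) list" where
  "GR_play s = map (\<lambda>x. (mv x, jp x)) s"

definition GR :: "('m, 'f) occ list set \<Rightarrow> ('m \<times> nat option) list set" where
  "GR \<sigma> = GR_play ` \<sigma>"

end

theory Submission
  imports Defs
begin

(* Let s and t be mu-rigid plays with the same skeleton GR(t) = GR(s), i.e. the
   same moves and lambda-pointers.  In a play, O-occurrences carry no mu-pointers, and in a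
   mu-rigid play a P-occurrence points position-wise to its predecessor and copies its
   instantiation; the predecessor is an O-occurrence by alternation.  So everything in s besides
   its skeleton is determined by the O-instantiations.  These are lists of pairwise distinct
   O-variables whose lengths are fixed by the moves, hence t is turned into s by an injective
   O-renaming.  By uniformity, any rigid strategy containing t then contains s, which gives
   GR(sigma) = GR(tau) ==> sigma = tau. *)

lemma O_or_P:
  assumes "wf_arena A" "m \<in> moves A"
  shows "is_O A m \<or> is_P A m"
proof -
  have "\<forall>m\<in>moves A. \<exists>n. has_depth (par A) m n"
    using assms(1) unfolding wf_arena_def by (elim conjE)
  then obtain n where "has_depth (par A) m n" using assms(2) by blast
  then show ?thesis unfolding is_O_def is_P_def by (cases "even n") blast+
qed

text \<open>A bijection between two finite sets of natural numbers, given as two distinct lists of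
  equal length, extends to an injection of all natural numbers: outside the first list, shift
  every index beyond the second list.\<close>

lemma inj_extend_lists:
  fixes xs ys :: "nat list"
  assumes dxs: "distinct xs" and dys: "distinct ys" and len: "length xs = length ys"
  shows "\<exists>\<rho>. inj \<rho> \<and> map \<rho> xs = ys"
proof -
  define K where "K = Suc (Max (insert 0 (set ys)))"
  define \<rho> where "\<rho> x = (case map_of (zip xs ys) x of Some y \<Rightarrow> y | None \<Rightarrow> x + K)" for x
  have \<rho>_nth: "\<rho> (xs ! i) = ys ! i" if "i < length xs" for i
    using map_of_zip_nth[OF len dxs] that len by (simp add: \<rho>_def)
  have \<rho>_out: "\<rho> x = x + K" if "x \<notin> set xs" for x
  proof -
    have "fst ` set (zip xs ys) = set xs" using len by (metis map_fst_zip set_map)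
    with that have "map_of (zip xs ys) x = None" by (simp add: map_of_eq_None_iff)
    then show ?thesis by (simp add: \<rho>_def)
  qed
  have below_K: "y < K" if "y \<in> set ys" for y
    using that by (simp add: K_def less_Suc_eq_le)
  have "inj \<rho>"
  proof (rule injI)
    fix a b assume eq: "\<rho> a = \<rho> b"
    show "a = b"
    proof (cases "a \<in> set xs"; cases "b \<in> set xs")
      assume "a \<in> set xs" "b \<in> set xs"
      then obtain i j where "i < length xs" "a = xs ! i" "j < length xs" "b = xs ! j"
        by (auto simp: in_set_conv_nth)
      with eq dys len show ?thesis by (simp add: \<rho>_nth nth_eq_iff_index_eq)
    next
      assume "a \<in> set xs" "b \<notin> set xs"
      then obtain i where "i < length xs" "a = xs ! i" by (auto simp: in_set_conv_nth)
      moreover have "ys ! i < K" using \<open>i < length xs\<close> len below_K by simp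
      ultimately show ?thesis using eq \<open>b \<notin> set xs\<close> by (simp add: \<rho>_nth \<rho>_out)
    next
      assume "a \<notin> set xs" "b \<in> set xs"
      then obtain j where "j < length xs" "b = xs ! j" by (auto simp: in_set_conv_nth)
      moreover have "ys ! j < K" using \<open>j < length xs\<close> len below_K by simp
      ultimately show ?thesis using eq \<open>a \<notin> set xs\<close> by (simp add: \<rho>_nth \<rho>_out)
    next
      assume "a \<notin> set xs" "b \<notin> set xs"
      with eq show ?thesis by (simp add: \<rho>_out)
    qed
  qed
  moreover have "map \<rho> xs = ys"
    using len by (simp add: list_eq_iff_nth_eq \<rho>_nth)
  ultimately show ?thesis by blast
qed

lemma oren_between_ovar_lists:
  assumes "distinct us" "distinct vs" "length us = length vs"
    and "\<forall>u\<in>set us. \<exists>o'. u = Var (OV o')" and "\<forall>v\<in>set vs. \<exists>o'. v = Var (OV o')"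
  shows "\<exists>\<rho>. inj \<rho> \<and> map (oren \<rho>) us = vs"
proof -
  obtain xs ys where us: "us = map (\<lambda>o'. Var (OV o')) xs" and vs: "vs = map (\<lambda>o'. Var (OV o')) ys"
    using assms(4,5) by (metis ex_map_conv)
  have "distinct xs" "distinct ys" "length xs = length ys"
    using assms(1-3) by (simp_all add: us vs distinct_map)
  then obtain \<rho> where "inj \<rho>" "map \<rho> xs = ys"
    using inj_extend_lists by blast
  then show ?thesis by (intro exI[of _ \<rho>]) (auto simp: us vs)
qed

lemma GR_play_eqD:
  assumes "GR_play t = GR_play s"
  shows "length t = length s"
    and "i < length s \<Longrightarrow> mv (t!i) = mv (s!i) \<and> jp (t!i) = jp (s!i)"
proof -
  show len: "length t = length s" using arg_cong[OF assms, of length] by (simp add: GR_play_def)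
  show "i < length s \<Longrightarrow> mv (t!i) = mv (s!i) \<and> jp (t!i) = jp (s!i)"
    using arg_cong[OF assms, of "\<lambda>l. l ! i"] len by (simp add: GR_play_def)
qed

lemma justified_seq_occ:
  assumes "justified_seq A s" "i < length s"
  shows "length (mp (s!i)) = length (atl A (mv (s!i)))"
    and "length (ins (s!i)) = length (fol A (mv (s!i)))"
    and "mv (s!i) \<in> moves A"
    and "is_O A (mv (s!i)) \<Longrightarrow> u \<in> set (ins (s!i)) \<Longrightarrow> \<exists>o'. u = Var (OV o')"
proof -
  note occ = assms(1)[unfolded justified_seq_def, THEN conjunct1, rule_format, OF assms(2)]
  from occ show "length (mp (s!i)) = length (atl A (mv (s!i)))" by (elim conjE)
  from occ show "length (ins (s!i)) = length (fol A (mv (s!i)))" by (elim conjE)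
  from occ show "mv (s!i) \<in> moves A" by (elim conjE)
  from occ have "is_O A (mv (s!i)) \<longrightarrow> (\<forall>u\<in>set (ins (s!i)). \<exists>o'. u = Var (OV o'))"
    by (elim conjE)
  then show "is_O A (mv (s!i)) \<Longrightarrow> u \<in> set (ins (s!i)) \<Longrightarrow> \<exists>o'. u = Var (OV o')" by blast
qed

lemma play_pred_of_P:
  assumes "play A s" "i < length s" "0 < i" "is_P A (mv (s!i))"
  shows "is_O A (mv (s!(i-1)))"
proof -
  have alternation: "\<forall>i. Suc i < length s \<longrightarrow> (is_O A (mv (s!i)) \<longleftrightarrow> is_P A (mv (s!Suc i)))"
    using assms(1) unfolding play_def by (elim conjE)
  have "Suc (i-1) < length s" using assms(2,3) by simp
  with alternation have "is_O A (mv (s!(i-1))) \<longleftrightarrow> is_P A (mv (s!Suc (i-1)))" by blast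
  with assms(3,4) show ?thesis by simp
qed

lemma mu_rigid_play_P:
  assumes "mu_rigid_play A s" "i < length s" "is_P A (mv (s!i))"
  shows "0 < i"
    and "ins (s!i) = ins (s!(i-1))"
    and "q < length (mp (s!i)) \<Longrightarrow> mp (s!i) ! q = Some (i-1, q)"
  using assms(1)[unfolded mu_rigid_play_def, rule_format, OF assms(2,3)] by simp_all

lemma mu_rigid_play_mp:
  assumes wf: "wf_arena A" and s: "play A s" "mu_rigid_play A s" and i: "i < length s"
  shows "mp (s!i) = (if is_O A (mv (s!i))
      then replicate (length (atl A (mv (s!i)))) None
      else map (\<lambda>q. Some (i-1, q)) [0..<length (atl A (mv (s!i)))])"
proof -
  have js: "justified_seq A s" using s(1) unfolding play_def by blast
  note len = justified_seq_occ(1)[OF js i]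
  show ?thesis
  proof (cases "is_O A (mv (s!i))")
    case True
    have "\<forall>i<length s. is_O A (mv (s!i)) \<longrightarrow> (\<forall>x\<in>set (mp (s!i)). x = None)"
      using s(1) unfolding play_def by (elim conjE)
    with True i have "\<forall>x\<in>set (mp (s!i)). x = None" by blast
    then have "mp (s!i) = replicate (length (atl A (mv (s!i)))) None"
      using len by (intro replicate_eqI) auto
    with True show ?thesis by simp
  next
    case False
    then have P: "is_P A (mv (s!i))"
      using O_or_P[OF wf justified_seq_occ(3)[OF js i]] by simp
    have "mp (s!i) = map (\<lambda>q. Some (i-1, q)) [0..<length (atl A (mv (s!i)))]"
    proof (rule nth_equalityI)
      fix q assume "q < length (mp (s!i))"
      then show "mp (s!i) ! q = map (\<lambda>q. Some (i-1, q)) [0..<length (atl A (mv (s!i)))] ! q"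
        using mu_rigid_play_P(3)[OF s(2) i P] len by simp
    qed (simp add: len)
    with False show ?thesis by simp
  qed
qed

lemma concat_eq_segmentwise:
  assumes "concat xss = concat yss" and "map length xss = map length yss"
  shows "xss = yss"
proof -
  have "length xss = length yss" using arg_cong[OF assms(2), of length] by simp
  moreover have "length x = length y" if xy: "(x, y) \<in> set (zip xss yss)" for x y
  proof -
    obtain i where "i < length xss" "i < length yss" "x = xss ! i" "y = yss ! i"
      using xy by (auto simp: set_zip)
    then show ?thesis using arg_cong[OF assms(2), of "\<lambda>l. l ! i"] by simp
  qed
  ultimately show ?thesis using assms(1) concat_eq_concat_iff by blast
qed

text \<open>The concatenation of the instantiations of the O-occurrences, with an empty segment for
  every P-occurrence so that segments and occurrences correspond position by position.\<close>

definition o_segments :: "('m, 'f, 'p) arena \<Rightarrow> ('m, 'f) occ list \<Rightarrow> 'f trm list list" where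
  "o_segments A s = map (\<lambda>x. if is_O A (mv x) then ins x else []) s"

definition o_inst :: "('m, 'f, 'p) arena \<Rightarrow> ('m, 'f) occ list \<Rightarrow> 'f trm list" where
  "o_inst A s = concat (o_segments A s)"

lemma o_inst_filter: "o_inst A s = concat (map ins (filter (\<lambda>x. is_O A (mv x)) s))"
  unfolding o_inst_def o_segments_def by (induction s) auto

lemma o_inst_distinct: "justified_seq A s \<Longrightarrow> distinct (o_inst A s)"
  unfolding o_inst_filter justified_seq_def by blast

lemma o_inst_ovars:
  assumes "justified_seq A s" "u \<in> set (o_inst A s)"
  shows "\<exists>o'. u = Var (OV o')"
proof -
  from assms(2) obtain i where "i < length s" "is_O A (mv (s!i))" "u \<in> set (ins (s!i))"
    unfolding o_inst_filter by (auto simp: in_set_conv_nth)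
  then show ?thesis using justified_seq_occ(4)[OF assms(1)] by blast
qed

lemma o_inst_renaming:
  assumes js: "justified_seq A s" and jt: "justified_seq A t" and gr: "GR_play t = GR_play s"
  shows "\<exists>\<rho>. inj \<rho> \<and> (\<forall>i<length s. is_O A (mv (s!i)) \<longrightarrow> map (oren \<rho>) (ins (t!i)) = ins (s!i))"
proof -
  note len = GR_play_eqD(1)[OF gr]
  have seg_len: "map length (o_segments A t) = map length (o_segments A s)"
  proof (rule nth_equalityI)
    fix i assume "i < length (map length (o_segments A t))"
    then have i: "i < length s" using len by (simp add: o_segments_def)
    then show "map length (o_segments A t) ! i = map length (o_segments A s) ! i"
      using GR_play_eqD(2)[OF gr i] justified_seq_occ(2)[OF js i] justified_seq_occ(2)[OF jt] len
      by (simp add: o_segments_def)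
  qed (simp add: len o_segments_def)
  then have "length (o_inst A t) = length (o_inst A s)"
    by (simp add: o_inst_def length_concat)
  moreover have "\<forall>u\<in>set (o_inst A t). \<exists>o'. u = Var (OV o')" "\<forall>v\<in>set (o_inst A s). \<exists>o'. v = Var (OV o')"
    using o_inst_ovars[OF jt] o_inst_ovars[OF js] by blast+
  ultimately obtain \<rho> where inj: "inj \<rho>" and ren: "map (oren \<rho>) (o_inst A t) = o_inst A s"
    using oren_between_ovar_lists[OF o_inst_distinct[OF jt] o_inst_distinct[OF js]] by blast
  have "concat (map (map (oren \<rho>)) (o_segments A t)) = concat (o_segments A s)"
    using ren by (simp add: o_inst_def map_concat)
  moreover have "map length (map (map (oren \<rho>)) (o_segments A t)) = map length (o_segments A s)"
    using seg_len by (simp add: comp_def)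
  ultimately have segs: "map (map (oren \<rho>)) (o_segments A t) = o_segments A s"
    by (rule concat_eq_segmentwise)
  have "map (oren \<rho>) (ins (t!i)) = ins (s!i)" if i: "i < length s" "is_O A (mv (s!i))" for i
    using arg_cong[OF segs, of "\<lambda>l. l ! i"] i len GR_play_eqD(2)[OF gr i(1)]
    by (simp add: o_segments_def)
  with inj show ?thesis by blast
qed

text \<open>Mu-rigid plays with the same skeleton differ only by an injective O-renaming: their
  mu-pointers are determined by the skeleton, their O-instantiations are related by a renaming,
  and every P-occurrence copies the instantiation of the preceding O-occurrence.\<close>

lemma rigid_plays_renaming:
  assumes wf: "wf_arena A"
    and s: "play A s" "mu_rigid_play A s" and t: "play A t" "mu_rigid_play A t"
    and gr: "GR_play t = GR_play s"
  shows "\<exists>\<rho>. inj \<rho> \<and> rename \<rho> t = s"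
proof -
  have js: "justified_seq A s" and jt: "justified_seq A t"
    using s(1) t(1) unfolding play_def by blast+
  obtain \<rho> where inj: "inj \<rho>"
    and O_ins: "\<And>i. i < length s \<Longrightarrow> is_O A (mv (s!i)) \<Longrightarrow> map (oren \<rho>) (ins (t!i)) = ins (s!i)"
    using o_inst_renaming[OF js jt gr] by blast
  note len = GR_play_eqD(1)[OF gr] and skel = GR_play_eqD(2)[OF gr]
  have occ: "rename \<rho> t ! i = s ! i" if i: "i < length s" for i
  proof -
    have it: "i < length t" using i len by simp
    have "mp (t!i) = mp (s!i)"
      using mu_rigid_play_mp[OF wf s i] mu_rigid_play_mp[OF wf t it] skel[OF i] by simp
    moreover have "map (oren \<rho>) (ins (t!i)) = ins (s!i)"
    proof (cases "is_O A (mv (s!i))")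
      case True
      then show ?thesis using O_ins[OF i] by blast
    next
      case False
      then have Ps: "is_P A (mv (s!i))"
        using O_or_P[OF wf justified_seq_occ(3)[OF js i]] by blast
      then have Pt: "is_P A (mv (t!i))" using skel[OF i] by simp
      have i0: "0 < i" using mu_rigid_play_P(1)[OF s(2) i Ps] .
      have "is_O A (mv (s!(i-1)))" using play_pred_of_P[OF s(1) i i0 Ps] .
      then have "map (oren \<rho>) (ins (t!(i-1))) = ins (s!(i-1))" using O_ins i by simp
      then show ?thesis
        using mu_rigid_play_P(2)[OF s(2) i Ps] mu_rigid_play_P(2)[OF t(2) it Pt] by simp
    qed
    ultimately show ?thesis
      using skel[OF i] it by (simp add: rename_def occ.equality)
  qed
  have "rename \<rho> t = s"
    using len occ by (simp add: list_eq_iff_nth_eq rename_def)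
  with inj show ?thesis by blast
qed

text \<open>Among mu-rigid strategies, inclusion of the ground strategies implies inclusion of the
  strategies: a play of sigma has a rigid companion in tau with the same skeleton, which it
  is an injective renaming of, and tau is uniform.\<close>

lemma mu_rigid_strategy_GR_subset:
  assumes wf: "wf_arena A"
    and \<sigma>: "strategy A \<sigma>" "mu_rigid A \<sigma>" and \<tau>: "strategy A \<tau>" "mu_rigid A \<tau>"
    and gr: "GR \<sigma> \<subseteq> GR \<tau>"
  shows "\<sigma> \<subseteq> \<tau>"
proof
  fix s assume s: "s \<in> \<sigma>"
  then have "GR_play s \<in> GR \<tau>" using gr unfolding GR_def by blast
  then obtain t where t: "t \<in> \<tau>" "GR_play t = GR_play s" unfolding GR_def by auto
  have "play A s" using \<sigma>(1) s unfolding strategy_def by auto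
  moreover have "mu_rigid_play A s" using \<sigma>(2) s unfolding mu_rigid_def by blast
  moreover have "play A t" using \<tau>(1) t(1) unfolding strategy_def by auto
  moreover have "mu_rigid_play A t" using \<tau>(2) t(1) unfolding mu_rigid_def by blast
  ultimately obtain \<rho> where "inj \<rho>" "rename \<rho> t = s"
    using rigid_plays_renaming[OF wf] t(2) by blast
  moreover have "\<forall>\<rho>. inj \<rho> \<longrightarrow> rename \<rho> t \<in> \<tau>"
    using \<tau>(1) t(1) unfolding strategy_def by auto
  ultimately show "s \<in> \<tau>" by blast
qed

theorem mainTheorem10:
  fixes A :: "('m, 'f, 'p) arena" and \<sigma> \<tau> :: "('m, 'f) occ list set"
  assumes "wf_arena A"
    and "strategy A \<sigma>" and "strategy A \<tau>"
    and "mu_rigid A \<sigma>" and "mu_rigid A \<tau>"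
    and "GR \<sigma> = GR \<tau>"
  shows "\<sigma> = \<tau>"
proof (rule subset_antisym)
  show "\<sigma> \<subseteq> \<tau>"
    using mu_rigid_strategy_GR_subset[OF assms(1,2,4,3,5)] assms(6) by simp
  show "\<tau> \<subseteq> \<sigma>"
    using mu_rigid_strategy_GR_subset[OF assms(1,3,5,2,4)] assms(6) by simp
qed

end
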